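(* Let $\mathcal{S}=\{W_1,\dots,W_M\}\subset\mathbb{U}_N$ with $M\ge2$ and define $\delta$ by $\max_{1\le i<j\le M}|\mathrm{tr}(W_i^\dagger W_j)|=N(1-\delta)$, and assume $\delta>0$. Then for every $\epsilon>0$, $\mathcal{S}$ can be $\epsilon$-tested with query complexity $O\big(\frac{\log M}{\min\{\epsilon^2,\delta\}}\big)$, the implied constant being absolute.
   Context: $\mathbb{U}_N$ is the set of $N\times N$ unitaries. $\|A\|=\sqrt{\mathrm{tr}(A^\dagger A)}$; $D(A,B)=\min_{\theta\in[0,2\pi)}\frac{1}{\sqrt{2N}}\|e^{i\theta}A-B\|$; $D(A,\mathcal{S})=\inf_{B\in\mathcal{S}}D(A,B)$. For $\mathcal{S}\subseteq\mathbb{U}_N$, $U$ has property $\mathcal{S}$ if $U=e^{i\theta}V$ for some $V\in\mathcal{S}$, real $\theta$; $U$ is $\epsilon$-far from $\mathcal{S}$ if $D(U,V)\ge\epsilon$ for all $V\in\mathcal{S}$. Testing model: the unknown $U\in\mathbb{U}_N$ is a black box; the algorithm may prepare arbitrary states on the system plus an ancilla, apply $U\otimes I$ (one query each), interleaved with arbitrary fixed quantum operations, and measure. It $\epsilon$-tests $\mathcal{S}$ if for every $U\in\mathbb{U}_N$ it accepts with probability $\ge2/3$ when $U$ has property $\mathcal{S}$ and with probability $\le1/3$ when $U$ is $\epsilon$-far from $\mathcal{S}$; the query complexity is the number of queries. *)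

theory Defs
  imports "Jordan_Normal_Form.Schur_Decomposition"
begin

definition mtrace :: "complex mat \<Rightarrow> complex" where
  "mtrace A = (\<Sum>i<dim_row A. A $$ (i, i))"

definition unitary_mat :: "nat \<Rightarrow> complex mat \<Rightarrow> bool" where
  "unitary_mat N U \<longleftrightarrow> U \<in> carrier_mat N N \<and> mat_adjoint U * U = 1\<^sub>m N"

definition hs_norm :: "complex mat \<Rightarrow> real" where
  "hs_norm A = sqrt (Re (mtrace (mat_adjoint A * A)))"

definition phase_dist :: "nat \<Rightarrow> complex mat \<Rightarrow> complex mat \<Rightarrow> real" where
  "phase_dist N A B =
     (INF \<theta>\<in>{0..<2*pi}. hs_norm (exp (\<i> * complex_of_real \<theta>) \<cdot>\<^sub>m A - B) / sqrt (2 * real N))"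

definition has_property :: "complex mat set \<Rightarrow> complex mat \<Rightarrow> bool" where
  "has_property S U \<longleftrightarrow> (\<exists>\<theta>::real. \<exists>V\<in>S. U = exp (\<i> * complex_of_real \<theta>) \<cdot>\<^sub>m V)"

definition eps_far :: "nat \<Rightarrow> real \<Rightarrow> complex mat set \<Rightarrow> complex mat \<Rightarrow> bool" where
  "eps_far N \<epsilon> S U \<longleftrightarrow> (\<forall>V\<in>S. phase_dist N U V \<ge> \<epsilon>)"

definition vdot :: "complex vec \<Rightarrow> complex vec \<Rightarrow> complex" where
  "vdot u v = (\<Sum>i<dim_vec v. cnj (u $ i) * v $ i)"

text \<open>U \<otimes> I_K on C^N \<otimes> C^K, system index a and ancilla index b combined as a*K+b.\<close>
definition kron_id :: "nat \<Rightarrow> complex mat \<Rightarrow> complex mat" where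
  "kron_id K U = mat (dim_row U * K) (dim_col U * K)
     (\<lambda>(i, j). if i mod K = j mod K then U $$ (i div K, j div K) else 0)"

text \<open>Final state of the algorithm: V_q (U\<otimes>I) ... V_1 (U\<otimes>I) V_0 psi, with q = length Vs.\<close>
definition final_state :: "complex mat \<Rightarrow> nat \<Rightarrow> complex vec \<Rightarrow> complex mat \<Rightarrow> complex mat list \<Rightarrow> complex vec" where
  "final_state U K \<psi> V0 Vs = foldl (\<lambda>\<phi> V. V *\<^sub>v (kron_id K U *\<^sub>v \<phi>)) (V0 *\<^sub>v \<psi>) Vs"

text \<open>Two-outcome measurement: accepting POVM effect E, 0 \<le> E \<le> I.\<close>
definition is_effect :: "nat \<Rightarrow> complex mat \<Rightarrow> bool" where
  "is_effect n E \<longleftrightarrow> E \<in> carrier_mat n n \<and> mat_adjoint E = E \<and>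
     (\<forall>x\<in>carrier_vec n. 0 \<le> Re (vdot x (E *\<^sub>v x)) \<and> Re (vdot x (E *\<^sub>v x)) \<le> Re (vdot x x))"

definition accept_prob :: "complex mat \<Rightarrow> nat \<Rightarrow> complex vec \<Rightarrow> complex mat \<Rightarrow> complex mat list \<Rightarrow> complex mat \<Rightarrow> real" where
  "accept_prob U K \<psi> V0 Vs E = (let \<phi> = final_state U K \<psi> V0 Vs in Re (vdot \<phi> (E *\<^sub>v \<phi>)))"

definition valid_alg :: "nat \<Rightarrow> nat \<Rightarrow> nat \<Rightarrow> complex vec \<Rightarrow> complex mat \<Rightarrow> complex mat list \<Rightarrow> complex mat \<Rightarrow> bool" where
  "valid_alg N q K \<psi> V0 Vs E \<longleftrightarrow>
     K \<ge> 1 \<and> \<psi> \<in> carrier_vec (N * K) \<and> vdot \<psi> \<psi> = 1 \<and>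
     unitary_mat (N * K) V0 \<and> length Vs = q \<and> (\<forall>V\<in>set Vs. unitary_mat (N * K) V) \<and>
     is_effect (N * K) E"

definition eps_tests :: "nat \<Rightarrow> complex mat set \<Rightarrow> real \<Rightarrow> nat \<Rightarrow> bool" where
  "eps_tests N S \<epsilon> q \<longleftrightarrow>
     (\<exists>K \<psi> V0 Vs E. valid_alg N q K \<psi> V0 Vs E \<and>
        (\<forall>U. unitary_mat N U \<longrightarrow>
           (has_property S U \<longrightarrow> accept_prob U K \<psi> V0 Vs E \<ge> 2/3) \<and>
           (eps_far N \<epsilon> S U \<longrightarrow> accept_prob U K \<psi> V0 Vs E \<le> 1/3)))"

end

theory Submission
  imports Defs
begin

(* With t queries, prepare t copies of the maximally
   entangled state phi on C^N (x) C^N and apply the black box U (x) I to each copy; this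
   yields the t-fold Choi state |U>^t, and <W|U>^t = (tr(W^dagger U)/N)^t.  Then measure the
   effect E = 2/3 sum_i |W_i>^t <W_i|^t.
   (1) E is a legal measurement (E <= I): the states |W_i>^t have pairwise overlaps at most
       eta = (1 - m)^t, and a Bessel-type inequality for nearly orthonormal families bounds
       sum_i |<W_i|x>|^2 by (1 + M eta) |x|^2 <= 3/2 |x|^2 once 2 M eta <= 1.
   (2) If U = e^{i theta} W_k, the k-th term alone gives acceptance probability >= 2/3.
   (3) If U is eps-far from every W_i, then |tr(W_i^dagger U)|/N <= 1 - eps^2, so every
       term is at most (1 - m)^{2t} <= 1/(2M) and the acceptance probability is <= 1/3.
   Here m = min(eps^2, delta), and t = ceil(ln(2M)/m) <= 4 ln M / m makes (1 - m)^t <= 1/(2M). *)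

section \<open>Index arithmetic for the Kronecker layout\<close>

text \<open>Matrices and adjoints entry-wise; the library defines the adjoint via rows.\<close>
lemma mat_adjoint_alt: "mat_adjoint A = mat (dim_col A) (dim_row A) (\<lambda>(i,j). cnj (A $$ (j,i)))"
  by (rule eq_matI) (auto simp: mat_adjoint_def mat_of_rows_def)

lemma sum_nat_mult_split:
  fixes A B :: nat shows "(\<Sum>n<A*B. f n) = (\<Sum>i<A. \<Sum>j<B. f (i*B+j))"
proof (induction A)
  case 0 then show ?case by simp
next
  case (Suc A)
  have "(\<Sum>n<Suc A * B. f n) = (\<Sum>n<A*B + B. f n)" by (simp add: add.commute)
  also have "\<dots> = (\<Sum>n<A*B. f n) + (\<Sum>n=A*B..<A*B+B. f n)"
    using sum.atLeastLessThan_concat[of 0 "A*B" "A*B+B" f] by (simp add: atLeast0LessThan)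
  also have "(\<Sum>n=A*B..<A*B+B. f n) = (\<Sum>j<B. f (A*B+j))"
    using sum.shift_bounds_nat_ivl[of f 0 "A*B" B] by (simp add: atLeast0LessThan add.commute)
  finally show ?case using Suc by simp
qed

lemma pair_index_div_mod:
  fixes i j B :: nat assumes "j < B" shows "(i*B+j) div B = i" "(i*B+j) mod B = j"
  using assms by (auto simp: add.commute[of "i*B"])

lemma pair_index_less:
  fixes i j A B :: nat assumes "i < A" "j < B" shows "i * B + j < A * B"
proof -
  have "i * B + j < (i+1)*B" using assms by simp
  also have "\<dots> \<le> A * B" using assms by (intro mult_right_mono) auto
  finally show ?thesis .
qed

lemma vec_eq_pair_indexI:
  assumes "dim_vec v = A * B" "dim_vec w = A * B"
    and "\<And>i j. i < A \<Longrightarrow> j < B \<Longrightarrow> v $ (i*B+j) = w $ (i*B+j)"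
  shows "v = w"
proof (rule eq_vecI)
  show "dim_vec v = dim_vec w" using assms by simp
  fix n assume n: "n < dim_vec w"
  then have "B > 0" using assms by (cases "B = 0") auto
  then have "n div B < A" "n mod B < B" using n assms by (auto simp: less_mult_imp_div_less)
  moreover have "n = (n div B) * B + n mod B" by simp
  ultimately show "v $ n = w $ n" using assms(3) by metis
qed

lemma vdot_swap: "dim_vec u = dim_vec v \<Longrightarrow> vdot v u = cnj (vdot u v)"
  by (simp add: vdot_def mult.commute)

lemma vdot_self: "vdot x x = complex_of_real (\<Sum>i<dim_vec x. (cmod (x $ i))^2)"
  unfolding vdot_def of_real_sum complex_norm_square by (simp add: mult.commute)

lemma cnj_mult_self: "cnj z * z = complex_of_real ((cmod z)^2)"
  unfolding complex_norm_square by (rule mult.commute)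

lemma vdot_self_nonneg: "0 \<le> Re (vdot x x)"
  by (simp add: vdot_self sum_nonneg)

definition vec_tensor :: "complex vec \<Rightarrow> complex vec \<Rightarrow> complex vec" where
  "vec_tensor x y = vec (dim_vec x * dim_vec y) (\<lambda>n. x $ (n div dim_vec y) * y $ (n mod dim_vec y))"

definition tensor_unit :: "complex vec" where "tensor_unit = vec 1 (\<lambda>_. 1)"

lemma dim_vec_tensor[simp]: "dim_vec (vec_tensor x y) = dim_vec x * dim_vec y"
  by (simp add: vec_tensor_def)

lemma vec_tensor_index:
  "i < dim_vec x \<Longrightarrow> j < dim_vec y \<Longrightarrow> vec_tensor x y $ (i * dim_vec y + j) = x $ i * y $ j"
  by (simp add: vec_tensor_def pair_index_div_mod pair_index_less)

lemma vec_tensor_unit_left[simp]: "vec_tensor tensor_unit y = y"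
  by (rule eq_vecI) (auto simp: vec_tensor_def tensor_unit_def)

lemma vec_tensor_unit_right[simp]: "vec_tensor x tensor_unit = x"
  by (rule eq_vecI) (auto simp: vec_tensor_def tensor_unit_def)

lemma vdot_tensor_unit[simp]: "vdot tensor_unit tensor_unit = 1"
  by (simp add: vdot_def tensor_unit_def)

lemma vdot_vec_tensor:
  assumes "dim_vec x' = dim_vec x" "dim_vec y' = dim_vec y"
  shows "vdot (vec_tensor x y) (vec_tensor x' y') = vdot x x' * vdot y y'"
proof -
  have "vdot (vec_tensor x y) (vec_tensor x' y') =
      (\<Sum>i<dim_vec x. \<Sum>j<dim_vec y. (cnj (x $ i) * x' $ i) * (cnj (y $ j) * y' $ j))"
    unfolding vdot_def using assms vec_tensor_index[of _ x' _ y']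
    by (simp add: sum_nat_mult_split vec_tensor_index mult_ac)
  also have "\<dots> = vdot x x' * vdot y y'"
    unfolding vdot_def using assms by (simp add: sum_product)
  finally show ?thesis .
qed

lemma vec_tensor_assoc:
  "vec_tensor (vec_tensor x y) z = vec_tensor x (vec_tensor y z)"
proof (rule vec_eq_pair_indexI[of _ "dim_vec x * dim_vec y" "dim_vec z"])
  fix i k assume i: "i < dim_vec x * dim_vec y" and k: "k < dim_vec z"
  define a b where "a = i div dim_vec y" and "b = i mod dim_vec y"
  have "dim_vec y > 0" using i by (cases "dim_vec y = 0") auto
  then have ab: "a < dim_vec x" "b < dim_vec y" "i = a * dim_vec y + b"
    using i by (auto simp: a_def b_def less_mult_imp_div_less)
  have e: "i * dim_vec z + k = a * (dim_vec y * dim_vec z) + (b * dim_vec z + k)"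
    using ab by (simp add: algebra_simps)
  have bk: "b * dim_vec z + k < dim_vec y * dim_vec z" using ab k pair_index_less by blast
  have "vec_tensor (vec_tensor x y) z $ (i * dim_vec z + k) = x $ a * (y $ b * z $ k)"
    using vec_tensor_index[of i "vec_tensor x y" k z] vec_tensor_index[of a x b y] i k ab
    by (simp add: mult.assoc)
  moreover have "vec_tensor x (vec_tensor y z) $ (i * dim_vec z + k) = x $ a * (y $ b * z $ k)"
    unfolding e using vec_tensor_index[of a x "b * dim_vec z + k" "vec_tensor y z"]
      vec_tensor_index[of b y k z] ab k bk by simp
  ultimately show "vec_tensor (vec_tensor x y) z $ (i * dim_vec z + k) =
      vec_tensor x (vec_tensor y z) $ (i * dim_vec z + k)" by simp
qed auto

fun tensor_power :: "complex vec \<Rightarrow> nat \<Rightarrow> complex vec" where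
  "tensor_power x 0 = tensor_unit"
| "tensor_power x (Suc k) = vec_tensor x (tensor_power x k)"

lemma dim_tensor_power[simp]: "dim_vec (tensor_power x k) = dim_vec x ^ k"
  by (induction k) (auto simp: tensor_unit_def)

lemma tensor_power_Suc_right: "tensor_power x (Suc k) = vec_tensor (tensor_power x k) x"
proof (induction k)
  case (Suc k)
  have "tensor_power x (Suc (Suc k)) = vec_tensor x (vec_tensor (tensor_power x k) x)"
    using Suc.IH by simp
  also have "\<dots> = vec_tensor (tensor_power x (Suc k)) x" by (simp add: vec_tensor_assoc)
  finally show ?case .
qed simp

lemma vdot_tensor_power:
  "dim_vec y = dim_vec x \<Longrightarrow> vdot (tensor_power x k) (tensor_power y k) = (vdot x y) ^ k"
  by (induction k) (simp_all add: vdot_vec_tensor)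

lemma sum_delta_mult:
  fixes w :: "nat \<Rightarrow> complex"
  assumes "k < K" shows "(\<Sum>r<K. (if k = r then u else 0) * w r) = u * w k"
proof -
  have "(\<Sum>r<K. (if k = r then u else 0) * w r) = (\<Sum>r<K. if k = r then u * w r else 0)"
    by (intro sum.cong) auto
  then show ?thesis using assms by (simp add: sum.delta)
qed

lemma kron_id_mult_vec_index:
  assumes U: "U \<in> carrier_mat N N" and v: "dim_vec v = N * K" and n: "n < N * K"
  shows "(kron_id K U *\<^sub>v v) $ n = (\<Sum>b<N. U $$ (n div K, b) * v $ (b*K + n mod K))"
proof -
  have K: "K > 0" using n by (cases "K = 0") auto
  have "(kron_id K U *\<^sub>v v) $ n =
      (\<Sum>m<N*K. (if n mod K = m mod K then U $$ (n div K, m div K) else 0) * v $ m)"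
    using U v n by (simp add: kron_id_def scalar_prod_def atLeast0LessThan)
  also have "\<dots> = (\<Sum>b<N. \<Sum>r<K. (if n mod K = r then U $$ (n div K, b) else 0) * v $ (b*K+r))"
    unfolding sum_nat_mult_split by (intro sum.cong refl) (simp add: pair_index_div_mod)
  also have "\<dots> = (\<Sum>b<N. U $$ (n div K, b) * v $ (b*K + n mod K))"
    using K by (intro sum.cong refl) (simp add: sum_delta_mult)
  finally show ?thesis .
qed

lemma kron_id_vec_tensor:
  assumes U: "U \<in> carrier_mat N N" and x: "dim_vec x = N * K" and y: "dim_vec y = L"
  shows "kron_id (K*L) U *\<^sub>v vec_tensor x y = vec_tensor (kron_id K U *\<^sub>v x) y"
proof (rule vec_eq_pair_indexI[of _ "N*K" L])
  show "dim_vec (kron_id (K * L) U *\<^sub>v vec_tensor x y) = N * K * L"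
    "dim_vec (vec_tensor (kron_id K U *\<^sub>v x) y) = N * K * L"
    using U x y by (simp_all add: kron_id_def)
  fix i j assume i: "i < N*K" and j: "j < L"
  define a c where "a = i div K" and "c = i mod K"
  have "K > 0" using i by (cases "K = 0") auto
  then have ac: "a < N" "c < K" "i = a*K+c" using i by (auto simp: a_def c_def less_mult_imp_div_less)
  have cj: "c*L + j < K*L" using ac j pair_index_less by blast
  have e: "i * L + j = a * (K*L) + (c*L+j)" using ac by (simp add: algebra_simps)
  have "(kron_id (K * L) U *\<^sub>v vec_tensor x y) $ (i * L + j) =
      (\<Sum>b<N. U $$ (a, b) * vec_tensor x y $ (b*(K*L) + (c*L+j)))"
    unfolding e using U x y cj ac
    by (subst kron_id_mult_vec_index[of _ N]) (auto simp: pair_index_div_mod pair_index_less)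
  also have "\<dots> = (\<Sum>b<N. U $$ (a, b) * x $ (b*K+c)) * y $ j"
    unfolding sum_distrib_right
  proof (rule sum.cong)
    fix b assume b: "b \<in> {..<N}"
    have eq: "b*(K*L) + (c*L+j) = (b*K+c)*L + j" by (simp add: algebra_simps)
    have "b*K+c < N*K" using b ac pair_index_less by blast
    then show "U $$ (a, b) * vec_tensor x y $ (b*(K*L) + (c*L+j)) = U $$ (a, b) * x $ (b*K+c) * y $ j"
      unfolding eq using vec_tensor_index[of "b*K+c" x j y] j x y by simp
  qed simp
  also have "\<dots> = vec_tensor (kron_id K U *\<^sub>v x) y $ (i * L + j)"
    using vec_tensor_index[of i "kron_id K U *\<^sub>v x" j y] U x y i j ac
      kron_id_mult_vec_index[OF U x i]
    by (simp add: kron_id_def pair_index_div_mod)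
  finally show "(kron_id (K * L) U *\<^sub>v vec_tensor x y) $ (i * L + j) =
      vec_tensor (kron_id K U *\<^sub>v x) y $ (i * L + j)" .
qed

definition perm_mat :: "nat \<Rightarrow> (nat \<Rightarrow> nat) \<Rightarrow> complex mat" where
  "perm_mat D \<sigma> = mat D D (\<lambda>(n,m). if m = \<sigma> n then 1 else 0)"

lemma perm_mat_mult_vec_index:
  assumes "n < D" "\<sigma> n < D" "dim_vec v = D"
  shows "(perm_mat D \<sigma> *\<^sub>v v) $ n = v $ (\<sigma> n)"
proof -
  have "(perm_mat D \<sigma> *\<^sub>v v) $ n = (\<Sum>m<D. (if m = \<sigma> n then 1 else 0) * v $ m)"
    using assms by (simp add: perm_mat_def scalar_prod_def atLeast0LessThan)
  also have "\<dots> = (\<Sum>m<D. if \<sigma> n = m then v $ m else 0)" by (intro sum.cong) auto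
  also have "\<dots> = v $ (\<sigma> n)" using assms by (simp add: sum.delta)
  finally show ?thesis .
qed

lemma unitary_perm_mat:
  assumes "bij_betw \<sigma> {..<D} {..<D}"
  shows "unitary_mat D (perm_mat D \<sigma>)"
  unfolding unitary_mat_def
proof
  show "perm_mat D \<sigma> \<in> carrier_mat D D" by (simp add: perm_mat_def)
  show "mat_adjoint (perm_mat D \<sigma>) * perm_mat D \<sigma> = 1\<^sub>m D"
  proof (rule eq_matI)
    fix i j assume i: "i < dim_row (1\<^sub>m D)" and j: "j < dim_col (1\<^sub>m D)"
    define \<delta> where "\<delta> m = (if i = m then 1 else 0) * (if j = m then 1 else (0::complex))" for m
    have "(mat_adjoint (perm_mat D \<sigma>) * perm_mat D \<sigma>) $$ (i, j) = (\<Sum>k<D. \<delta> (\<sigma> k))"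
      using i j by (simp add: mat_adjoint_alt perm_mat_def scalar_prod_def atLeast0LessThan \<delta>_def)
        (intro sum.cong, auto)
    also have "\<dots> = (\<Sum>m<D. \<delta> m)" using sum.reindex_bij_betw[OF assms, of \<delta>] by simp
    also have "\<dots> = (\<Sum>m<D. if i = m then (if j = m then 1 else 0) else 0)"
      by (intro sum.cong) (auto simp: \<delta>_def)
    also have "\<dots> = 1\<^sub>m D $$ (i, j)" using i j by (simp add: sum.delta)
    finally show "(mat_adjoint (perm_mat D \<sigma>) * perm_mat D \<sigma>) $$ (i, j) = 1\<^sub>m D $$ (i, j)" .
  qed (auto simp: mat_adjoint_alt perm_mat_def)
qed

definition swap_index :: "nat \<Rightarrow> nat \<Rightarrow> nat \<Rightarrow> nat" where
  "swap_index A B n = (n mod A) * B + n div A"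

lemma swap_index_inverse:
  fixes n :: nat assumes "n < A * B" shows "swap_index B A (swap_index A B n) = n"
proof -
  have "n div A < B" using assms by (simp add: less_mult_imp_div_less mult.commute)
  then show ?thesis by (simp add: swap_index_def pair_index_div_mod)
qed

lemma swap_index_less:
  fixes n :: nat assumes "n < A * B" shows "swap_index A B n < A * B"
proof -
  have "A > 0" using assms by (cases "A = 0") auto
  moreover have "n div A < B" using assms by (simp add: less_mult_imp_div_less mult.commute)
  ultimately show ?thesis using pair_index_less[of "n mod A" A "n div A" B] by (simp add: swap_index_def)
qed

lemma bij_swap_index: "bij_betw (swap_index A B) {..<A*B} {..<A*B}"
proof (rule bij_betw_byWitness[where f'="swap_index B A"])
  show "\<forall>n\<in>{..<A*B}. swap_index B A (swap_index A B n) = n"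
    "\<forall>n\<in>{..<A*B}. swap_index A B (swap_index B A n) = n"
    using swap_index_inverse[of _ A B] swap_index_inverse[of _ B A] by (auto simp: mult.commute)
  show "swap_index A B ` {..<A*B} \<subseteq> {..<A*B}" "swap_index B A ` {..<A*B} \<subseteq> {..<A*B}"
    using swap_index_less[of _ A B] swap_index_less[of _ B A] by (auto simp: mult.commute)
qed

definition swap_mat :: "nat \<Rightarrow> nat \<Rightarrow> complex mat" where
  "swap_mat A B = perm_mat (A*B) (swap_index A B)"

lemma unitary_swap_mat: "unitary_mat (A*B) (swap_mat A B)"
  unfolding swap_mat_def by (rule unitary_perm_mat[OF bij_swap_index])

lemma swap_mat_vec_tensor:
  assumes x: "dim_vec x = A" and y: "dim_vec y = B"
  shows "swap_mat A B *\<^sub>v vec_tensor x y = vec_tensor y x"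
proof (rule vec_eq_pair_indexI[of _ B A])
  show "dim_vec (swap_mat A B *\<^sub>v vec_tensor x y) = B * A" by (simp add: swap_mat_def perm_mat_def)
  show "dim_vec (vec_tensor y x) = B * A" using x y by simp
  fix j i assume j: "j < B" and i: "i < A"
  have s: "swap_index A B (j*A+i) = i*B+j" using i by (simp add: swap_index_def pair_index_div_mod)
  have lt: "j*A+i < A*B" using pair_index_less[OF j i] by (simp add: mult.commute)
  show "(swap_mat A B *\<^sub>v vec_tensor x y) $ (j * A + i) = vec_tensor y x $ (j * A + i)"
    using perm_mat_mult_vec_index[of "j*A+i" "A*B" "swap_index A B" "vec_tensor x y"] s lt
      pair_index_less[OF i j] vec_tensor_index[of i x j y] vec_tensor_index[of j y i x] x y i j
    by (simp add: swap_mat_def)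
qed

section \<open>Traces and Choi states\<close>

lemma mtrace_adjoint_mult:
  assumes W: "W \<in> carrier_mat N N" and U: "U \<in> carrier_mat N N"
  shows "mtrace (mat_adjoint W * U) = (\<Sum>a<N. \<Sum>c<N. cnj (W $$ (a,c)) * U $$ (a,c))"
proof -
  have "mtrace (mat_adjoint W * U) = (\<Sum>i<N. \<Sum>k<N. cnj (W $$ (k,i)) * U $$ (k,i))"
    unfolding mtrace_def using W U by (simp add: mat_adjoint_alt scalar_prod_def atLeast0LessThan)
  also have "\<dots> = (\<Sum>a<N. \<Sum>c<N. cnj (W $$ (a,c)) * U $$ (a,c))" by (rule sum.swap)
  finally show ?thesis .
qed

lemma mtrace_adjoint_mult_swap:
  assumes "A \<in> carrier_mat N N" "B \<in> carrier_mat N N"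
  shows "mtrace (mat_adjoint A * B) = cnj (mtrace (mat_adjoint B * A))"
  unfolding mtrace_adjoint_mult[OF assms] mtrace_adjoint_mult[OF assms(2,1)] by (simp add: mult.commute)

lemma mtrace_smult: "A \<in> carrier_mat n n \<Longrightarrow> mtrace (c \<cdot>\<^sub>m A) = c * mtrace A"
  unfolding mtrace_def sum_distrib_left by (intro sum.cong) auto

lemma mtrace_unitary_self: "unitary_mat N U \<Longrightarrow> mtrace (mat_adjoint U * U) = of_nat N"
  by (simp add: unitary_mat_def mtrace_def)

lemma mtrace_phase_multiple:
  assumes W: "unitary_mat N W" and c: "cmod c = 1"
  shows "cmod (mtrace (mat_adjoint W * (c \<cdot>\<^sub>m W))) = real N"
proof -
  have Wc: "W \<in> carrier_mat N N" and adj: "mat_adjoint W \<in> carrier_mat N N"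
    using W by (auto simp: unitary_mat_def mat_adjoint_alt)
  have "mat_adjoint W * (c \<cdot>\<^sub>m W) = c \<cdot>\<^sub>m (mat_adjoint W * W)"
    by (rule mult_smult_distrib[OF adj Wc])
  then have "mtrace (mat_adjoint W * (c \<cdot>\<^sub>m W)) = c * of_nat N"
    using mtrace_smult[of "mat_adjoint W * W" N c] adj Wc mtrace_unitary_self[OF W] by simp
  then show ?thesis using c by (simp add: norm_mult)
qed

lemma inv_sqrt_amplitude_sq:
  assumes "N \<ge> 1"
  shows "cnj (complex_of_real (1 / sqrt (real N))) * complex_of_real (1 / sqrt (real N)) = 1 / of_nat N"
proof -
  have "cnj (complex_of_real (1 / sqrt (real N))) * complex_of_real (1 / sqrt (real N)) =
      complex_of_real (1 / sqrt (real N) * (1 / sqrt (real N)))"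
    by (simp only: of_real_mult complex_cnj_complex_of_real)
  also have "1 / sqrt (real N) * (1 / sqrt (real N)) = 1 / real N"
    using assms by (simp add: real_sqrt_mult[symmetric])
  finally show ?thesis by (metis of_real_divide of_real_1 of_real_of_nat_eq)
qed

definition max_entangled :: "nat \<Rightarrow> complex vec" where
  "max_entangled N = vec (N*N) (\<lambda>n. if n div N = n mod N then complex_of_real (1 / sqrt (real N)) else 0)"

definition choi :: "nat \<Rightarrow> complex mat \<Rightarrow> complex vec" where
  "choi N U = kron_id N U *\<^sub>v max_entangled N"

lemma dim_max_entangled[simp]: "dim_vec (max_entangled N) = N * N"
  by (simp add: max_entangled_def)

lemma dim_choi[simp]: "U \<in> carrier_mat N N \<Longrightarrow> dim_vec (choi N U) = N * N"
  by (simp add: choi_def kron_id_def)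

lemma vdot_max_entangled:
  assumes N: "N \<ge> 1" shows "vdot (max_entangled N) (max_entangled N) = 1"
proof -
  let ?s = "complex_of_real (1 / sqrt (real N))"
  have "vdot (max_entangled N) (max_entangled N) = (\<Sum>a<N. \<Sum>c<N. if a = c then cnj ?s * ?s else 0)"
    unfolding vdot_def dim_max_entangled sum_nat_mult_split
    by (intro sum.cong refl) (auto simp: max_entangled_def pair_index_div_mod pair_index_less)
  also have "\<dots> = of_nat N * (1 / of_nat N)" unfolding inv_sqrt_amplitude_sq[OF N] by simp
  also have "\<dots> = 1" using N by simp
  finally show ?thesis .
qed

lemma choi_index:
  assumes U: "U \<in> carrier_mat N N" and a: "a < N" and c: "c < N"
  shows "choi N U $ (a*N+c) = U $$ (a,c) * complex_of_real (1 / sqrt (real N))"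
proof -
  have "choi N U $ (a*N+c) = (\<Sum>b<N. U $$ (a, b) * max_entangled N $ (b*N + c))"
    unfolding choi_def using kron_id_mult_vec_index[OF U _ pair_index_less[OF a c]] c
    by (simp add: pair_index_div_mod)
  also have "\<dots> = (\<Sum>b<N. if c = b then U $$ (a, b) * complex_of_real (1 / sqrt (real N)) else 0)"
    using c pair_index_less[OF _ c] by (intro sum.cong) (auto simp: max_entangled_def pair_index_div_mod)
  also have "\<dots> = U $$ (a,c) * complex_of_real (1 / sqrt (real N))" using c by (simp add: sum.delta)
  finally show ?thesis .
qed

lemma vdot_choi:
  assumes W: "W \<in> carrier_mat N N" and U: "U \<in> carrier_mat N N" and N: "N \<ge> 1"
  shows "vdot (choi N W) (choi N U) = mtrace (mat_adjoint W * U) / of_nat N"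
proof -
  let ?s = "complex_of_real (1 / sqrt (real N))"
  have "vdot (choi N W) (choi N U) = (\<Sum>a<N. \<Sum>c<N. (cnj (W $$ (a,c)) * U $$ (a,c)) * (cnj ?s * ?s))"
    unfolding vdot_def using W U by (simp add: sum_nat_mult_split choi_index mult_ac)
  also have "\<dots> = mtrace (mat_adjoint W * U) / of_nat N"
    unfolding inv_sqrt_amplitude_sq[OF N] mtrace_adjoint_mult[OF W U] by (simp add: sum_divide_distrib)
  finally show ?thesis .
qed

lemma vdot_choi_power:
  assumes "W \<in> carrier_mat N N" "U \<in> carrier_mat N N" "N \<ge> 1"
  shows "vdot (tensor_power (choi N W) t) (tensor_power (choi N U) t) = (mtrace (mat_adjoint W * U) / of_nat N) ^ t"
  using assms by (simp add: vdot_tensor_power vdot_choi)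

lemma vdot_choi_power_self:
  assumes "unitary_mat N W" "N \<ge> 1"
  shows "vdot (tensor_power (choi N W) t) (tensor_power (choi N W) t) = 1"
  using assms vdot_choi_power[of W N W t] mtrace_unitary_self[of N W] by (simp add: unitary_mat_def)

lemma vdot_choi_power_le:
  assumes "A \<in> carrier_mat N N" "B \<in> carrier_mat N N" "N \<ge> 1"
    and "cmod (mtrace (mat_adjoint A * B)) \<le> real N * \<rho>"
  shows "cmod (vdot (tensor_power (choi N A) t) (tensor_power (choi N B) t)) \<le> \<rho> ^ t"
proof -
  have "cmod (mtrace (mat_adjoint A * B)) / real N \<le> \<rho>"
    using assms(3,4) by (simp add: divide_le_eq mult.commute)
  then show ?thesis unfolding vdot_choi_power[OF assms(1-3)]
    by (simp add: norm_power norm_divide power_mono)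
qed

lemma vdot_choi_power_phase_multiple:
  assumes W: "unitary_mat N W" and c: "cmod c = 1" and N: "N \<ge> 1"
  shows "cmod (vdot (tensor_power (choi N W) t) (tensor_power (choi N (c \<cdot>\<^sub>m W)) t)) = 1"
proof -
  have Wc: "W \<in> carrier_mat N N" using W by (simp add: unitary_mat_def)
  then have "c \<cdot>\<^sub>m W \<in> carrier_mat N N" by simp
  then show ?thesis using vdot_choi_power[OF Wc _ N] mtrace_phase_multiple[OF W c] N
    by (simp add: norm_power norm_divide)
qed

section \<open>Preparing \<open>t\<close> Choi states with \<open>t\<close> queries\<close>

text \<open>The circuit works on \<open>t\<close> registers of dimension \<open>N\<^sup>2\<close>, initially all \<open>\<phi>\<close>.  Each round queries
  the first register and then rotates it to the end; after \<open>j\<close> rounds the state is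
  \<open>\<phi>\<^sup>\<otimes>\<^sup>(\<^sup>t\<^sup>-\<^sup>j\<^sup>) \<otimes> (choi U)\<^sup>\<otimes>\<^sup>j\<close>.\<close>
lemma choi_rounds:
  assumes U: "U \<in> carrier_mat N N" and j: "j \<le> t"
  shows "foldl (\<lambda>\<phi> V. V *\<^sub>v (kron_id (N*(N*N)^(t-1)) U *\<^sub>v \<phi>))
            (tensor_power (max_entangled N) t) (replicate j (swap_mat (N*N) ((N*N)^(t-1))))
       = vec_tensor (tensor_power (max_entangled N) (t-j)) (tensor_power (choi N U) j)"
  using j
proof (induction j)
  case 0 then show ?case by simp
next
  case (Suc j)
  let ?L = "(N*N)^(t-1)" and ?\<phi> = "max_entangled N"
  obtain k where k: "t - j = Suc k" using Suc.prems by (metis Suc_diff_Suc Suc_le_lessD)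
  define rest where "rest = vec_tensor (tensor_power ?\<phi> k) (tensor_power (choi N U) j)"
  have "k + j = t - 1" using k Suc.prems by arith
  then have dim_rest: "dim_vec rest = ?L" using U by (simp add: rest_def power_add[symmetric])
  have IH: "foldl (\<lambda>\<phi> V. V *\<^sub>v (kron_id (N*?L) U *\<^sub>v \<phi>)) (tensor_power ?\<phi> t)
      (replicate j (swap_mat (N*N) ?L)) = vec_tensor ?\<phi> rest"
    using Suc k by (simp add: rest_def vec_tensor_assoc)
  have "foldl (\<lambda>\<phi> V. V *\<^sub>v (kron_id (N*?L) U *\<^sub>v \<phi>)) (tensor_power ?\<phi> t)
      (replicate (Suc j) (swap_mat (N*N) ?L))
      = swap_mat (N*N) ?L *\<^sub>v (kron_id (N*?L) U *\<^sub>v vec_tensor ?\<phi> rest)"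
  proof -
    have "replicate (Suc j) (swap_mat (N*N) ?L) = replicate j (swap_mat (N*N) ?L) @ [swap_mat (N*N) ?L]"
      by (simp add: replicate_append_same)
    then show ?thesis by (simp only: foldl_append IH) simp
  qed
  also have "\<dots> = swap_mat (N*N) ?L *\<^sub>v vec_tensor (choi N U) rest"
    using kron_id_vec_tensor[OF U _ dim_rest, of ?\<phi>] by (simp add: choi_def)
  also have "\<dots> = vec_tensor rest (choi N U)"
    using swap_mat_vec_tensor[OF dim_choi[OF U] dim_rest] by simp
  also have "\<dots> = vec_tensor (tensor_power ?\<phi> (t - Suc j)) (tensor_power (choi N U) (Suc j))"
  proof -
    have "t - Suc j = k" using k by arith
    then show ?thesis unfolding rest_def tensor_power_Suc_right[of "choi N U" j]
      by (simp add: vec_tensor_assoc del: tensor_power.simps(2))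
  qed
  finally show ?case by simp
qed

lemma choi_power_circuit:
  assumes N: "N \<ge> 1" and t: "t \<ge> 1"
  shows "\<exists>K \<psi> V0 Vs. K \<ge> 1 \<and> N * K = (N*N)^t \<and> \<psi> \<in> carrier_vec (N*K) \<and> vdot \<psi> \<psi> = 1 \<and>
     unitary_mat (N*K) V0 \<and> length Vs = t \<and> (\<forall>V\<in>set Vs. unitary_mat (N*K) V) \<and>
     (\<forall>U \<in> carrier_mat N N. final_state U K \<psi> V0 Vs = tensor_power (choi N U) t)"
proof -
  define L where "L = (N*N)^(t-1)"
  define K where "K = N * L"
  define \<psi> where "\<psi> = tensor_power (max_entangled N) t"
  define V0 where "V0 = (1\<^sub>m (N*K) :: complex mat)"
  define Vs where "Vs = replicate t (swap_mat (N*N) L)"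
  have NK: "N * K = N * N * L" by (simp add: K_def)
  have D: "N * K = (N*N)^t" unfolding NK L_def using t by (cases t) auto
  have "1 \<le> L" using N by (simp add: L_def)
  then have K1: "K \<ge> 1" using N by (simp add: K_def)
  have \<psi>_carrier: "\<psi> \<in> carrier_vec (N*K)" unfolding \<psi>_def
    by (rule carrier_vecI) (simp only: dim_tensor_power dim_max_entangled D)
  have \<psi>_norm: "vdot \<psi> \<psi> = 1" using N by (simp add: \<psi>_def vdot_tensor_power vdot_max_entangled)
  have "mat_adjoint V0 = V0" unfolding V0_def by (rule eq_matI) (auto simp: mat_adjoint_alt)
  then have V0: "unitary_mat (N*K) V0" by (simp add: unitary_mat_def V0_def)
  have Vs: "\<forall>V\<in>set Vs. unitary_mat (N*K) V"
    unfolding Vs_def NK using unitary_swap_mat[of "N*N" L] by simp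
  have "final_state U K \<psi> V0 Vs = tensor_power (choi N U) t" if U: "U \<in> carrier_mat N N" for U
  proof -
    have "V0 *\<^sub>v \<psi> = \<psi>" unfolding V0_def using \<psi>_carrier by (rule one_mult_mat_vec)
    then show ?thesis
      using choi_rounds[OF U order_refl, of t]
      by (simp add: final_state_def Vs_def K_def L_def \<psi>_def)
  qed
  then show ?thesis using K1 D \<psi>_carrier \<psi>_norm V0 Vs
    by (intro exI[of _ K] exI[of _ \<psi>] exI[of _ V0] exI[of _ Vs] conjI) (simp_all add: Vs_def)
qed

section \<open>A measurement for a nearly orthonormal family of states\<close>

lemma sum_mult_le_card_sum_sq:
  fixes f :: "nat \<Rightarrow> real"
  shows "(\<Sum>i<M. \<Sum>j<M. f i * f j) \<le> real M * (\<Sum>i<M. (f i)^2)"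
proof -
  have "(\<Sum>i<M. \<Sum>j<M. f i * f j) \<le> (\<Sum>i<M. \<Sum>j<M. ((f i)^2 + (f j)^2) / 2)"
  proof (intro sum_mono)
    fix i j
    have "0 \<le> (f i - f j)^2" by simp
    then show "f i * f j \<le> ((f i)^2 + (f j)^2) / 2" by (simp add: power2_eq_square algebra_simps)
  qed
  also have "\<dots> = real M * (\<Sum>i<M. (f i)^2)"
  proof -
    have "(\<Sum>i<M. \<Sum>j<M. ((f i)^2 + (f j)^2) / 2) = (\<Sum>i<M. \<Sum>j<M. (f i)^2 / 2) + (\<Sum>i<M. \<Sum>j<M. (f j)^2 / 2)"
      by (simp add: add_divide_distrib sum.distrib)
    also have "(\<Sum>i<M. \<Sum>j<M. (f j)^2 / 2) = (\<Sum>i<M. \<Sum>j<M. (f i)^2 / 2)"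
      by (rule sum.swap)
    finally show ?thesis by (simp add: sum_divide_distrib[symmetric])
  qed
  finally show ?thesis .
qed

definition lincomb :: "nat \<Rightarrow> nat \<Rightarrow> (nat \<Rightarrow> complex) \<Rightarrow> (nat \<Rightarrow> complex vec) \<Rightarrow> complex vec" where
  "lincomb D M a \<phi> = vec D (\<lambda>b. \<Sum>i<M. a i * \<phi> i $ b)"

lemma vdot_lincomb_left:
  assumes x: "dim_vec x = D" and \<phi>: "\<And>i. i < M \<Longrightarrow> dim_vec (\<phi> i) = D"
  shows "vdot (lincomb D M a \<phi>) x = (\<Sum>i<M. cnj (a i) * vdot (\<phi> i) x)"
proof -
  have "vdot (lincomb D M a \<phi>) x = (\<Sum>b<D. \<Sum>i<M. cnj (a i) * (cnj (\<phi> i $ b) * x $ b))"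
    unfolding vdot_def lincomb_def using x by (simp add: sum_distrib_right mult.assoc)
  also have "\<dots> = (\<Sum>i<M. cnj (a i) * vdot (\<phi> i) x)"
    unfolding vdot_def using \<phi> x by (simp add: sum.swap[of _ "{..<D}"] sum_distrib_left)
  finally show ?thesis .
qed

lemma vdot_lincomb_self:
  assumes \<phi>: "\<And>i. i < M \<Longrightarrow> dim_vec (\<phi> i) = D"
  shows "vdot (lincomb D M a \<phi>) (lincomb D M a \<phi>) =
    (\<Sum>i<M. \<Sum>j<M. cnj (a i) * a j * vdot (\<phi> i) (\<phi> j))"
proof -
  have "vdot (lincomb D M a \<phi>) (lincomb D M a \<phi>) =
      (\<Sum>i<M. cnj (a i) * vdot (\<phi> i) (lincomb D M a \<phi>))"
    by (rule vdot_lincomb_left) (simp_all add: lincomb_def \<phi>)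
  also have "\<dots> = (\<Sum>i<M. \<Sum>j<M. cnj (a i) * a j * vdot (\<phi> i) (\<phi> j))"
  proof (rule sum.cong[OF refl])
    fix i assume i: "i \<in> {..<M}"
    have "vdot (\<phi> i) (lincomb D M a \<phi>) = cnj (vdot (lincomb D M a \<phi>) (\<phi> i))"
      using i \<phi> by (intro vdot_swap) (simp add: lincomb_def)
    also have "\<dots> = (\<Sum>j<M. a j * cnj (vdot (\<phi> j) (\<phi> i)))"
      using vdot_lincomb_left[OF \<phi>[of i] \<phi>, where a=a] i by simp
    also have "\<dots> = (\<Sum>j<M. a j * vdot (\<phi> i) (\<phi> j))"
      using i \<phi> by (intro sum.cong refl) (simp add: vdot_swap[of "\<phi> i" "\<phi> _"])
    finally show "cnj (a i) * vdot (\<phi> i) (lincomb D M a \<phi>) = (\<Sum>j<M. cnj (a i) * a j * vdot (\<phi> i) (\<phi> j))"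
      by (simp add: sum_distrib_left mult_ac)
  qed
  finally show ?thesis .
qed

lemma norm_lincomb_near_orthonormal:
  assumes \<phi>: "\<And>i. i < M \<Longrightarrow> dim_vec (\<phi> i) = D"
    and norm: "\<And>i. i < M \<Longrightarrow> vdot (\<phi> i) (\<phi> i) = 1"
    and off: "\<And>i j. i < M \<Longrightarrow> j < M \<Longrightarrow> i \<noteq> j \<Longrightarrow> cmod (vdot (\<phi> i) (\<phi> j)) \<le> \<eta>"
    and eta: "0 \<le> \<eta>"
  shows "Re (vdot (lincomb D M a \<phi>) (lincomb D M a \<phi>)) \<le> (1 + real M * \<eta>) * (\<Sum>i<M. (cmod (a i))^2)"
proof -
  define S where "S = (\<Sum>i<M. (cmod (a i))^2)"
  have gram: "vdot (lincomb D M a \<phi>) (lincomb D M a \<phi>) =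
      (\<Sum>i<M. \<Sum>j<M. cnj (a i) * a j * vdot (\<phi> i) (\<phi> j))"
    using \<phi> by (rule vdot_lincomb_self)
  have "Re (vdot (lincomb D M a \<phi>) (lincomb D M a \<phi>)) \<le>
      (\<Sum>i<M. \<Sum>j<M. cmod (cnj (a i) * a j * vdot (\<phi> i) (\<phi> j)))"
    unfolding gram Re_sum by (intro sum_mono complex_Re_le_cmod)
  also have "\<dots> \<le> (\<Sum>i<M. \<Sum>j<M. (if i = j then (cmod (a i))^2 else 0) + \<eta> * (cmod (a i) * cmod (a j)))"
  proof (intro sum_mono)
    fix i j assume i: "i \<in> {..<M}" and j: "j \<in> {..<M}"
    show "cmod (cnj (a i) * a j * vdot (\<phi> i) (\<phi> j)) \<le>
        (if i = j then (cmod (a i))^2 else 0) + \<eta> * (cmod (a i) * cmod (a j))"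
    proof (cases "i = j")
      case True
      then show ?thesis using norm i eta by (simp add: norm_mult power2_eq_square)
    next
      case False
      then have "cmod (a i) * cmod (a j) * cmod (vdot (\<phi> i) (\<phi> j)) \<le> cmod (a i) * cmod (a j) * \<eta>"
        using off i j by (intro mult_left_mono) auto
      then show ?thesis using False by (simp add: norm_mult mult_ac)
    qed
  qed
  also have "\<dots> = S + \<eta> * (\<Sum>i<M. \<Sum>j<M. cmod (a i) * cmod (a j))"
    unfolding S_def by (simp add: sum.distrib sum_distrib_left sum.delta)
  also have "\<dots> \<le> S + \<eta> * (real M * S)"
    unfolding S_def using eta by (intro add_left_mono mult_left_mono sum_mult_le_card_sum_sq) auto
  finally show ?thesis by (simp add: S_def algebra_simps)
qed

text \<open>Proof: expand \<open>0 \<le> \<parallel>x - s y\<parallel>\<^sup>2\<close> for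
  \<open>y = \<Sum>\<^sub>i \<langle>\<phi>\<^sub>i|x\<rangle> \<phi>\<^sub>i\<close> and \<open>s = 1/(1 + M\<eta>)\<close>.\<close>
lemma bessel_near_orthonormal:
  assumes x: "dim_vec x = D" and \<phi>: "\<And>i. i < M \<Longrightarrow> dim_vec (\<phi> i) = D"
    and norm: "\<And>i. i < M \<Longrightarrow> vdot (\<phi> i) (\<phi> i) = 1"
    and off: "\<And>i j. i < M \<Longrightarrow> j < M \<Longrightarrow> i \<noteq> j \<Longrightarrow> cmod (vdot (\<phi> i) (\<phi> j)) \<le> \<eta>"
    and eta: "0 \<le> \<eta>"
  shows "(\<Sum>i<M. (cmod (vdot (\<phi> i) x))^2) \<le> (1 + real M * \<eta>) * Re (vdot x x)"
proof -
  define a where "a i = vdot (\<phi> i) x" for i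
  define S where "S = (\<Sum>i<M. (cmod (a i))^2)"
  define B where "B = 1 + real M * \<eta>"
  define s where "s = 1 / B"
  define y where "y = lincomb D M a \<phi>"
  have B: "B > 0" using eta by (simp add: B_def add_pos_nonneg)
  have dy: "dim_vec y = D" by (simp add: y_def lincomb_def)
  have "vdot y x = (\<Sum>i<M. cnj (a i) * vdot (\<phi> i) x)"
    unfolding y_def by (rule vdot_lincomb_left[OF x \<phi>])
  also have "\<dots> = complex_of_real S"
    unfolding S_def a_def of_real_sum complex_norm_square by (simp add: mult.commute)
  finally have yx: "vdot y x = complex_of_real S" .
  then have xy: "vdot x y = complex_of_real S" using vdot_swap[of y x] x dy by simp
  have yy: "Re (vdot y y) \<le> B * S"
    unfolding y_def B_def S_def by (rule norm_lincomb_near_orthonormal[OF \<phi> norm off eta])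
  define z where "z = vec D (\<lambda>b. x $ b - complex_of_real s * y $ b)"
  have "vdot z z = vdot x x - complex_of_real s * vdot x y - complex_of_real s * vdot y x
      + complex_of_real (s * s) * vdot y y"
    unfolding z_def vdot_def using x dy
    by (simp add: sum.distrib sum_subtractf sum_distrib_left algebra_simps)
  then have "Re (vdot z z) = Re (vdot x x) - 2 * s * S + s * s * Re (vdot y y)"
    unfolding xy yx by simp
  also have "\<dots> \<le> Re (vdot x x) - 2 * s * S + s * s * (B * S)"
    using yy by (intro add_left_mono mult_left_mono) auto
  also have "\<dots> = Re (vdot x x) - S / B" using B by (simp add: s_def field_simps)
  finally have "S / B \<le> Re (vdot x x)" using vdot_self_nonneg[of z] by linarith
  then show ?thesis using B by (simp add: S_def a_def B_def field_simps)
qed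

definition fingerprint_effect :: "nat \<Rightarrow> nat \<Rightarrow> (nat \<Rightarrow> complex vec) \<Rightarrow> complex mat" where
  "fingerprint_effect D M \<phi> = mat D D (\<lambda>(a,b). (2/3) * (\<Sum>i<M. \<phi> i $ a * cnj (\<phi> i $ b)))"

lemma fingerprint_effect_quadratic_form:
  assumes x: "dim_vec x = D" and \<phi>: "\<And>i. i < M \<Longrightarrow> dim_vec (\<phi> i) = D"
  shows "Re (vdot x (fingerprint_effect D M \<phi> *\<^sub>v x)) = (2/3) * (\<Sum>i<M. (cmod (vdot (\<phi> i) x))^2)"
proof -
  have "vdot x (fingerprint_effect D M \<phi> *\<^sub>v x) =
      (2/3) * (\<Sum>a<D. \<Sum>b<D. \<Sum>i<M. (cnj (x $ a) * \<phi> i $ a) * (cnj (\<phi> i $ b) * x $ b))"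
    unfolding vdot_def fingerprint_effect_def using x
    by (simp add: scalar_prod_def atLeast0LessThan sum_distrib_left sum_distrib_right mult_ac)
  also have "\<dots> = (2/3) * (\<Sum>a<D. \<Sum>i<M. \<Sum>b<D. (cnj (x $ a) * \<phi> i $ a) * (cnj (\<phi> i $ b) * x $ b))"
    by (rule arg_cong[where f="\<lambda>s. (2/3) * s"], rule sum.cong[OF refl], rule sum.swap)
  also have "\<dots> = (2/3) * (\<Sum>i<M. \<Sum>a<D. \<Sum>b<D. (cnj (x $ a) * \<phi> i $ a) * (cnj (\<phi> i $ b) * x $ b))"
    by (rule arg_cong[where f="\<lambda>s. (2/3) * s"]) (rule sum.swap)
  also have "\<dots> = (2/3) * (\<Sum>i<M. cnj (vdot (\<phi> i) x) * vdot (\<phi> i) x)"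
  proof -
    have "cnj (vdot (\<phi> i) x) = (\<Sum>a<D. cnj (x $ a) * \<phi> i $ a)" if "i < M" for i
      unfolding vdot_def using x by (simp add: mult.commute)
    moreover have "vdot (\<phi> i) x = (\<Sum>b<D. cnj (\<phi> i $ b) * x $ b)" for i
      unfolding vdot_def using x by simp
    ultimately show ?thesis by (simp add: sum_product)
  qed
  also have "\<dots> = (2/3) * (\<Sum>i<M. complex_of_real ((cmod (vdot (\<phi> i) x))^2))"
    by (simp only: cnj_mult_self)
  finally have q: "vdot x (fingerprint_effect D M \<phi> *\<^sub>v x) =
      (2/3) * (\<Sum>i<M. complex_of_real ((cmod (vdot (\<phi> i) x))^2))" .
  have "Re ((2/3) * (\<Sum>i<M. complex_of_real ((cmod (vdot (\<phi> i) x))^2))) =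
      (2/3) * (\<Sum>i<M. (cmod (vdot (\<phi> i) x))^2)"
    by (simp add: Re_sum)
  then show ?thesis unfolding q .
qed

lemma fingerprint_effect_is_effect:
  assumes \<phi>: "\<And>i. i < M \<Longrightarrow> dim_vec (\<phi> i) = D"
    and norm: "\<And>i. i < M \<Longrightarrow> vdot (\<phi> i) (\<phi> i) = 1"
    and off: "\<And>i j. i < M \<Longrightarrow> j < M \<Longrightarrow> i \<noteq> j \<Longrightarrow> cmod (vdot (\<phi> i) (\<phi> j)) \<le> \<eta>"
    and eta: "0 \<le> \<eta>" "real M * \<eta> \<le> 1/2"
  shows "is_effect D (fingerprint_effect D M \<phi>)"
  unfolding is_effect_def
proof (intro conjI ballI)
  show "fingerprint_effect D M \<phi> \<in> carrier_mat D D" by (simp add: fingerprint_effect_def)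
  show "mat_adjoint (fingerprint_effect D M \<phi>) = fingerprint_effect D M \<phi>"
    by (rule eq_matI) (auto simp: mat_adjoint_alt fingerprint_effect_def mult.commute)
  fix x :: "complex vec" assume "x \<in> carrier_vec D"
  then have x: "dim_vec x = D" by simp
  have q: "Re (vdot x (fingerprint_effect D M \<phi> *\<^sub>v x)) = (2/3) * (\<Sum>i<M. (cmod (vdot (\<phi> i) x))^2)"
    using x \<phi> by (rule fingerprint_effect_quadratic_form)
  show "0 \<le> Re (vdot x (fingerprint_effect D M \<phi> *\<^sub>v x))"
    unfolding q by (simp add: sum_nonneg)
  have "(\<Sum>i<M. (cmod (vdot (\<phi> i) x))^2) \<le> (1 + real M * \<eta>) * Re (vdot x x)"
    by (rule bessel_near_orthonormal[OF x \<phi> norm off eta(1)])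
  also have "\<dots> \<le> 3/2 * Re (vdot x x)"
    using eta(2) vdot_self_nonneg[of x] by (intro mult_right_mono) auto
  finally show "Re (vdot x (fingerprint_effect D M \<phi> *\<^sub>v x)) \<le> Re (vdot x x)"
    unfolding q by simp
qed

section \<open>Phase distance versus trace overlap\<close>

lemma hs_norm_sq_phase_diff:
  assumes U: "unitary_mat N U" and W: "unitary_mat N W" and c: "cmod c = 1"
  shows "Re (mtrace (mat_adjoint (c \<cdot>\<^sub>m U - W) * (c \<cdot>\<^sub>m U - W))) =
    2 * real N - 2 * Re (c * mtrace (mat_adjoint W * U))"
proof -
  have Uc: "U \<in> carrier_mat N N" and Wc: "W \<in> carrier_mat N N" using U W by (auto simp: unitary_mat_def)
  have Ac: "c \<cdot>\<^sub>m U - W \<in> carrier_mat N N" using Uc Wc by auto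
  have cc: "cnj c * c = 1" using c by (metis cnj_mult_self of_real_1 power_one)
  have TUU: "(\<Sum>a<N. \<Sum>b<N. cnj (U $$ (a,b)) * U $$ (a,b)) = of_nat N"
    using mtrace_unitary_self[OF U] mtrace_adjoint_mult[OF Uc Uc] by simp
  have TWW: "(\<Sum>a<N. \<Sum>b<N. cnj (W $$ (a,b)) * W $$ (a,b)) = of_nat N"
    using mtrace_unitary_self[OF W] mtrace_adjoint_mult[OF Wc Wc] by simp
  define \<tau> where "\<tau> = mtrace (mat_adjoint W * U)"
  have TWU: "(\<Sum>a<N. \<Sum>b<N. cnj (W $$ (a,b)) * U $$ (a,b)) = \<tau>"
    using mtrace_adjoint_mult[OF Wc Uc] by (simp add: \<tau>_def)
  have TUW: "(\<Sum>a<N. \<Sum>b<N. cnj (U $$ (a,b)) * W $$ (a,b)) = cnj \<tau>"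
    unfolding TWU[symmetric] by (simp add: mult.commute)
  have "mtrace (mat_adjoint (c \<cdot>\<^sub>m U - W) * (c \<cdot>\<^sub>m U - W)) =
      (\<Sum>a<N. \<Sum>b<N. (cnj c * c) * (cnj (U $$ (a,b)) * U $$ (a,b)) - cnj c * (cnj (U $$ (a,b)) * W $$ (a,b))
       - c * (cnj (W $$ (a,b)) * U $$ (a,b)) + cnj (W $$ (a,b)) * W $$ (a,b))"
    unfolding mtrace_adjoint_mult[OF Ac Ac] using Uc Wc by (intro sum.cong refl) (simp add: algebra_simps)
  also have "\<dots> = of_nat N - cnj c * cnj \<tau> - c * \<tau> + of_nat N"
    unfolding cc by (simp add: sum.distrib sum_subtractf sum_distrib_left[symmetric] TUU TWW TWU TUW)
  finally show ?thesis unfolding \<tau>_def[symmetric] by simp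
qed

lemma phase_dist_le:
  assumes U: "unitary_mat N U" and W: "unitary_mat N W" and \<theta>: "\<theta> \<in> {0..<2*pi}"
  shows "phase_dist N U W \<le> hs_norm (exp (\<i> * complex_of_real \<theta>) \<cdot>\<^sub>m U - W) / sqrt (2 * real N)"
proof -
  have "0 \<le> hs_norm (exp (\<i> * complex_of_real \<theta>') \<cdot>\<^sub>m U - W) / sqrt (2 * real N)" for \<theta>'
  proof -
    have A: "exp (\<i> * complex_of_real \<theta>') \<cdot>\<^sub>m U - W \<in> carrier_mat N N"
      using U W by (auto simp: unitary_mat_def)
    show ?thesis unfolding hs_norm_def mtrace_adjoint_mult[OF A A]
      by (simp add: Re_sum sum_nonneg)
  qed
  then have "bdd_below ((\<lambda>\<theta>. hs_norm (exp (\<i> * complex_of_real \<theta>) \<cdot>\<^sub>m U - W) / sqrt (2 * real N)) ` {0..<2*pi})"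
    by (intro bdd_belowI[of _ 0]) auto
  then show ?thesis unfolding phase_dist_def using \<theta> by (rule cINF_lower)
qed

lemma exists_phase_to_modulus:
  "\<exists>\<theta>\<in>{0..<2*pi}. exp (\<i> * complex_of_real \<theta>) * \<tau> = complex_of_real (cmod \<tau>)"
proof (cases "\<tau> = 0")
  case True then show ?thesis by (intro bexI[of _ 0]) auto
next
  case False
  define a where "a = - Arg \<tau>"
  have A: "sgn \<tau> = cis (Arg \<tau>)" "-pi < Arg \<tau>" "Arg \<tau> \<le> pi" using Arg_correct[OF False] by auto
  have "\<tau> = complex_of_real (cmod \<tau>) * sgn \<tau>"
    by (simp add: complex_sgn_def scaleR_conv_of_real False)
  then have \<tau>: "\<tau> = complex_of_real (cmod \<tau>) * cis (Arg \<tau>)" using A(1) by simp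
  have "cis a * \<tau> = complex_of_real (cmod \<tau>) * (cis a * cis (Arg \<tau>))"
    by (subst \<tau>) (simp only: mult_ac)
  then have ca: "cis a * \<tau> = complex_of_real (cmod \<tau>)" by (simp add: a_def cis_mult)
  define \<theta> where "\<theta> = (if 0 \<le> a then a else a + 2*pi)"
  have th: "\<theta> \<in> {0..<2*pi}" using A by (auto simp: \<theta>_def a_def)
  have "cis \<theta> = cis a" by (simp add: \<theta>_def cis_mult[symmetric])
  then show ?thesis using th ca by (intro bexI[of _ \<theta>]) (auto simp: cis_conv_exp)
qed

text \<open>If \<open>U\<close> is \<open>\<epsilon>\<close>-far from \<open>W\<close> then \<open>|tr(W\<^sup>\<dagger> U)|/N \<le> 1 - \<epsilon>\<^sup>2\<close>: choose the phase aligning the trace.\<close>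
lemma trace_overlap_le_of_far:
  assumes U: "unitary_mat N U" and W: "unitary_mat N W" and N: "N \<ge> 1"
    and e: "0 < \<epsilon>" and d: "\<epsilon> \<le> phase_dist N U W"
  shows "cmod (mtrace (mat_adjoint W * U)) / real N \<le> 1 - \<epsilon>^2"
proof -
  define \<tau> where "\<tau> = mtrace (mat_adjoint W * U)"
  obtain \<theta> where \<theta>: "\<theta> \<in> {0..<2*pi}"
    and c\<tau>: "exp (\<i> * complex_of_real \<theta>) * \<tau> = complex_of_real (cmod \<tau>)"
    using exists_phase_to_modulus by blast
  have "cmod (exp (\<i> * complex_of_real \<theta>)) = 1" by simp
  then have "hs_norm (exp (\<i> * complex_of_real \<theta>) \<cdot>\<^sub>m U - W) =
      sqrt (2 * real N - 2 * Re (exp (\<i> * complex_of_real \<theta>) * \<tau>))"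
    unfolding hs_norm_def \<tau>_def by (simp only: hs_norm_sq_phase_diff[OF U W])
  also have "\<dots> = sqrt (2 * real N - 2 * cmod \<tau>)" unfolding c\<tau> by simp
  finally have hs: "hs_norm (exp (\<i> * complex_of_real \<theta>) \<cdot>\<^sub>m U - W) = sqrt (2 * real N - 2 * cmod \<tau>)" .
  have "\<epsilon> \<le> sqrt ((2 * real N - 2 * cmod \<tau>) / (2 * real N))"
    using d phase_dist_le[OF U W \<theta>] unfolding hs by (simp add: real_sqrt_divide)
  then have "\<epsilon>^2 \<le> (2 * real N - 2 * cmod \<tau>) / (2 * real N)"
    using e by (intro sqrt_ge_absD) simp
  also have "\<dots> = 1 - cmod \<tau> / real N" using N by (simp add: field_simps)
  finally show ?thesis unfolding \<tau>_def by simp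
qed

text \<open>With \<open>t = \<lceil>ln(2M)/m\<rceil>\<close> we get \<open>(1 - m)\<^sup>t \<le> e\<^sup>-\<^sup>m\<^sup>t \<le> 1/(2M)\<close> and \<open>t \<le> 4 ln M / m\<close>.\<close>
lemma exists_query_count:
  assumes M: "M \<ge> 2" and m: "0 < m" "m \<le> 1"
  shows "\<exists>t::nat. t \<ge> 1 \<and> real t \<le> 4 * ln (real M) / m \<and> (1 - m)^t \<le> 1 / (2 * real M)"
proof -
  define x where "x = ln (2 * real M) / m"
  define t where "t = nat \<lceil>x\<rceil>"
  have x_pos: "x > 0" using M m by (simp add: x_def)
  have tx: "real t \<ge> x" "real t < x + 1" using x_pos ceiling_correct[of x] by (auto simp: t_def)
  have t_pos: "t \<ge> 1" using x_pos tx(1) by (cases t) auto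
  have ln2: "ln (2::real) \<ge> 1/2"
  proof -
    have "ln (1/2::real) \<le> 1/2 - 1" by (rule ln_le_minus_one) simp
    then show ?thesis by (simp add: ln_div)
  qed
  have lnM: "ln (real M) \<ge> ln 2" using M by simp
  have l2M: "ln (2 * real M) = ln 2 + ln (real M)" using M by (simp add: ln_mult)
  have "x \<le> 2 * ln (real M) / m" unfolding x_def l2M using lnM m by (intro divide_right_mono) auto
  moreover have "1 \<le> 2 * ln (real M) / m"
  proof -
    have "m \<le> 2 * ln (real M)" using m lnM ln2 by linarith
    then show ?thesis using m by simp
  qed
  ultimately have "real t \<le> 4 * ln (real M) / m" using tx by (simp add: add_divide_distrib[symmetric])
  moreover have "(1 - m)^t \<le> 1 / (2 * real M)"
  proof -
    have "(1 - m)^t \<le> (exp (-m))^t"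
      using m by (intro power_mono) (auto simp: add_uminus_conv_diff[symmetric] exp_ge_add_one_self simp del: add_uminus_conv_diff)
    also have "\<dots> = exp (- (m * real t))" by (simp add: exp_of_nat_mult[symmetric] mult.commute)
    also have "\<dots> \<le> exp (- ln (2 * real M))"
    proof -
      have "ln (2 * real M) \<le> m * real t" using tx m unfolding x_def by (simp add: field_simps)
      then show ?thesis by simp
    qed
    also have "\<dots> = 1 / (2 * real M)" using M by (simp add: exp_minus inverse_eq_divide)
    finally show ?thesis .
  qed
  ultimately show ?thesis using t_pos by blast
qed

lemma fingerprint_tester:
  assumes circuit: "K \<ge> 1" "\<psi> \<in> carrier_vec (N*K)" "vdot \<psi> \<psi> = 1" "unitary_mat (N*K) V0"
      "length Vs = q" "\<forall>V\<in>set Vs. unitary_mat (N*K) V"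
    and state: "\<And>U. unitary_mat N U \<Longrightarrow> final_state U K \<psi> V0 Vs = F U \<and> dim_vec (F U) = N*K"
    and dim_\<phi>: "\<And>i. i < M \<Longrightarrow> dim_vec (\<phi> i) = N*K"
    and norm: "\<And>i. i < M \<Longrightarrow> vdot (\<phi> i) (\<phi> i) = 1"
    and off: "\<And>i j. i < M \<Longrightarrow> j < M \<Longrightarrow> i \<noteq> j \<Longrightarrow> cmod (vdot (\<phi> i) (\<phi> j)) \<le> \<eta>"
    and eta: "0 \<le> \<eta>" "real M * \<eta> \<le> 1/2"
    and yes: "\<And>U. unitary_mat N U \<Longrightarrow> has_property S U \<Longrightarrow> \<exists>k<M. cmod (vdot (\<phi> k) (F U)) = 1"
    and no: "\<And>U i. unitary_mat N U \<Longrightarrow> eps_far N \<epsilon> S U \<Longrightarrow> i < M \<Longrightarrow>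
      (cmod (vdot (\<phi> i) (F U)))^2 \<le> 1 / (2 * real M)"
  shows "eps_tests N S \<epsilon> q"
proof -
  define E where "E = fingerprint_effect (N*K) M \<phi>"
  have "is_effect (N*K) E"
    unfolding E_def using dim_\<phi> norm off eta by (rule fingerprint_effect_is_effect)
  then have valid: "valid_alg N q K \<psi> V0 Vs E" unfolding valid_alg_def using circuit by blast
  have acc: "accept_prob U K \<psi> V0 Vs E = 2/3 * (\<Sum>i<M. (cmod (vdot (\<phi> i) (F U)))^2)"
    if U: "unitary_mat N U" for U
    using state[OF U] dim_\<phi> unfolding accept_prob_def Let_def E_def
    by (simp add: fingerprint_effect_quadratic_form)
  have "2/3 \<le> accept_prob U K \<psi> V0 Vs E" if U: "unitary_mat N U" and has_prop: "has_property S U" for U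
  proof -
    obtain k where k: "k < M" "cmod (vdot (\<phi> k) (F U)) = 1" using yes[OF U has_prop] by blast
    then have "1 \<le> (\<Sum>i<M. (cmod (vdot (\<phi> i) (F U)))^2)"
      using member_le_sum[of k "{..<M}" "\<lambda>i. (cmod (vdot (\<phi> i) (F U)))^2"] by simp
    then show ?thesis unfolding acc[OF U] by simp
  qed
  moreover have "accept_prob U K \<psi> V0 Vs E \<le> 1/3" if U: "unitary_mat N U" and far: "eps_far N \<epsilon> S U" for U
  proof -
    have "(\<Sum>i<M. (cmod (vdot (\<phi> i) (F U)))^2) \<le> (\<Sum>i<M. 1 / (2 * real M))"
      using no[OF U far] by (intro sum_mono) auto
    also have "\<dots> \<le> 1/2" by simp
    finally show ?thesis unfolding acc[OF U] by simp
  qed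
  ultimately show ?thesis unfolding eps_tests_def using valid by blast
qed

lemma vdot_choi_power_far:
  assumes U: "unitary_mat N U" and W: "unitary_mat N W" and N: "N \<ge> 1"
    and e: "0 < \<epsilon>" and far: "\<epsilon> \<le> phase_dist N U W" and m: "0 \<le> m" "m \<le> \<epsilon>^2"
  shows "(cmod (vdot (tensor_power (choi N W) t) (tensor_power (choi N U) t)))^2 \<le> (1 - m)^t"
proof -
  define r where "r = cmod (mtrace (mat_adjoint W * U)) / real N"
  have "r \<le> 1 - \<epsilon>^2" unfolding r_def by (rule trace_overlap_le_of_far[OF U W N e far])
  then have r: "0 \<le> r" "r \<le> 1 - m" using m by (auto simp: r_def)
  have "(cmod (vdot (tensor_power (choi N W) t) (tensor_power (choi N U) t)))^2 = (r^t)^2"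
    using U W N by (simp add: vdot_choi_power unitary_mat_def r_def norm_power norm_divide)
  also have "\<dots> \<le> ((1 - m)^t)^2" using r by (intro power_mono) auto
  also have "\<dots> \<le> (1 - m)^t"
  proof -
    have "0 \<le> (1 - m)^t" "(1 - m)^t \<le> 1" using r m by (auto intro: power_le_one)
    then show ?thesis by (simp add: power2_eq_square mult_left_le)
  qed
  finally show ?thesis .
qed

lemma choi_tester:
  assumes N: "N \<ge> 1" and t: "t \<ge> 1"
    and W: "\<And>i. i < M \<Longrightarrow> unitary_mat N (W i)"
    and off: "\<And>i j. i < M \<Longrightarrow> j < M \<Longrightarrow> i \<noteq> j \<Longrightarrow>
      cmod (mtrace (mat_adjoint (W i) * W j)) \<le> real N * (1 - m)"
    and m: "0 \<le> m" "m \<le> 1" "m \<le> \<epsilon>^2" and e: "0 < \<epsilon>"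
    and small: "(1 - m)^t \<le> 1 / (2 * real M)"
  shows "eps_tests N (W ` {..<M}) \<epsilon> t"
proof -
  obtain K \<psi> V0 Vs where circuit: "K \<ge> 1" "N * K = (N*N)^t" "\<psi> \<in> carrier_vec (N*K)" "vdot \<psi> \<psi> = 1"
      "unitary_mat (N*K) V0" "length Vs = t" "\<forall>V\<in>set Vs. unitary_mat (N*K) V"
    and final: "\<And>U. U \<in> carrier_mat N N \<Longrightarrow> final_state U K \<psi> V0 Vs = tensor_power (choi N U) t"
    using choi_power_circuit[OF N t] by blast
  define F where "F U = tensor_power (choi N U) t" for U
  have carrier: "unitary_mat N U \<Longrightarrow> U \<in> carrier_mat N N" for U by (simp add: unitary_mat_def)
  have state: "final_state U K \<psi> V0 Vs = F U \<and> dim_vec (F U) = N*K" if "unitary_mat N U" for U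
    using final[OF carrier[OF that]] carrier[OF that] circuit(2) by (simp add: F_def)
  have yes: "\<exists>k<M. cmod (vdot (F (W k)) (F U)) = 1"
    if "unitary_mat N U" and has_prop: "has_property (W ` {..<M}) U" for U
  proof -
    obtain \<theta> k where "k < M" "U = exp (\<i> * complex_of_real \<theta>) \<cdot>\<^sub>m W k"
      using has_prop unfolding has_property_def by blast
    then show ?thesis unfolding F_def using vdot_choi_power_phase_multiple[OF W _ N] by auto
  qed
  have no: "(cmod (vdot (F (W i)) (F U)))^2 \<le> 1 / (2 * real M)"
    if U: "unitary_mat N U" and far: "eps_far N \<epsilon> (W ` {..<M}) U" and i: "i < M" for U i
  proof -
    have "\<epsilon> \<le> phase_dist N U (W i)" using far i unfolding eps_far_def by blast
    then show ?thesis unfolding F_def using vdot_choi_power_far[OF U W[OF i] N e _ m(1,3)] small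
      by (meson order_trans)
  qed
  have eta: "0 \<le> (1 - m)^t" "real M * (1 - m)^t \<le> 1/2"
    using small m by (cases "M = 0"; auto simp: field_simps)+
  show ?thesis
  proof (rule fingerprint_tester[where F = F and \<phi> = "\<lambda>i. F (W i)" and \<eta> = "(1 - m)^t"])
    show "cmod (vdot (F (W i)) (F (W j))) \<le> (1 - m)^t" if "i < M" "j < M" "i \<noteq> j" for i j
      unfolding F_def using vdot_choi_power_le[OF carrier carrier N off] W that by blast
  qed (use circuit(1,3-7) state W N eta yes no in \<open>auto simp: F_def vdot_choi_power_self\<close>)
qed

text \<open>Every off-diagonal trace overlap is bounded by the maximum over the pairs \<open>i < j\<close>
  (the pairs \<open>j < i\<close> being complex conjugates).\<close>
lemma trace_overlap_le_max:
  fixes W :: "nat \<Rightarrow> complex mat"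
  assumes W: "\<And>i. i < M \<Longrightarrow> W i \<in> carrier_mat N N"
    and a: "a < M" and b: "b < M" and ab: "a \<noteq> b"
  shows "cmod (mtrace (mat_adjoint (W a) * W b)) \<le>
    Max {cmod (mtrace (mat_adjoint (W i) * W j)) | i j. i < j \<and> j < M}"
proof -
  define S where "S = {cmod (mtrace (mat_adjoint (W i) * W j)) | i j. i < j \<and> j < M}"
  have "S \<subseteq> (\<lambda>(i,j). cmod (mtrace (mat_adjoint (W i) * W j))) ` ({..<M} \<times> {..<M})"
  proof
    fix x assume "x \<in> S"
    then obtain i j where "x = cmod (mtrace (mat_adjoint (W i) * W j))" "i < j" "j < M"
      unfolding S_def by blast
    then show "x \<in> (\<lambda>(i,j). cmod (mtrace (mat_adjoint (W i) * W j))) ` ({..<M} \<times> {..<M})"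
      by (intro image_eqI[where x="(i,j)"]) simp_all
  qed
  then have fin: "finite S" by (rule finite_subset) simp
  have swap: "cmod (mtrace (mat_adjoint (W a) * W b)) = cmod (mtrace (mat_adjoint (W b) * W a))"
    using mtrace_adjoint_mult_swap[OF W[OF a] W[OF b]] by simp
  consider "a < b" | "b < a" using ab by arith
  then have "cmod (mtrace (mat_adjoint (W a) * W b)) \<in> S"
  proof cases
    case 1 then show ?thesis unfolding S_def using b by blast
  next
    case 2 then show ?thesis unfolding S_def swap using a by blast
  qed
  from Max_ge[OF fin this] show ?thesis unfolding S_def .
qed

theorem theorem4:
  "\<exists>C>0. \<forall>(N::nat) (M::nat) (W::nat \<Rightarrow> complex mat) (\<delta>::real) (\<epsilon>::real).
     N \<ge> 1 \<longrightarrow> M \<ge> 2 \<longrightarrow>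
     (\<forall>i<M. unitary_mat N (W i)) \<longrightarrow>
     card (W ` {..<M}) = M \<longrightarrow>
     Max {cmod (mtrace (mat_adjoint (W i) * W j)) | i j. i < j \<and> j < M} = real N * (1 - \<delta>) \<longrightarrow>
     \<delta> > 0 \<longrightarrow> \<epsilon> > 0 \<longrightarrow>
     (\<exists>q. real q \<le> C * ln (real M) / min (\<epsilon>\<^sup>2) \<delta> \<and> eps_tests N (W ` {..<M}) \<epsilon> q)"
proof (intro exI[of _ "4::real"] conjI allI impI)
  fix N M :: nat and W :: "nat \<Rightarrow> complex mat" and \<delta> \<epsilon> :: real
  assume N: "N \<ge> 1" and M: "M \<ge> 2" and W: "\<forall>i<M. unitary_mat N (W i)"
    and "card (W ` {..<M}) = M"
    and mx: "Max {cmod (mtrace (mat_adjoint (W i) * W j)) | i j. i < j \<and> j < M} = real N * (1 - \<delta>)"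
    and \<delta>: "\<delta> > 0" and \<epsilon>: "\<epsilon> > 0"
  have Wc: "\<And>i. i < M \<Longrightarrow> W i \<in> carrier_mat N N" using W by (simp add: unitary_mat_def)
  have off: "cmod (mtrace (mat_adjoint (W i) * W j)) \<le> real N * (1 - \<delta>)"
    if "i < M" "j < M" "i \<noteq> j" for i j
    using Wc that unfolding mx[symmetric] by (rule trace_overlap_le_max)
  have "cmod (mtrace (mat_adjoint (W 0) * W 1)) \<le> real N * (1 - \<delta>)" using off[of 0 1] M by simp
  then have "0 \<le> real N * (1 - \<delta>)" by (meson norm_ge_zero order_trans)
  then have "\<delta> \<le> 1" using N by (simp add: zero_le_mult_iff)
  define m where "m = min (\<epsilon>\<^sup>2) \<delta>"
  have m: "0 < m" "m \<le> 1" "m \<le> \<delta>" "m \<le> \<epsilon>^2" using \<delta> \<epsilon> \<open>\<delta> \<le> 1\<close> by (auto simp: m_def)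
  obtain t where t: "t \<ge> 1" "real t \<le> 4 * ln (real M) / m" "(1 - m)^t \<le> 1 / (2 * real M)"
    using exists_query_count[OF M m(1,2)] by blast
  have "real N * (1 - \<delta>) \<le> real N * (1 - m)" using m(3) by (intro mult_left_mono) auto
  then have off_m: "cmod (mtrace (mat_adjoint (W i) * W j)) \<le> real N * (1 - m)"
    if "i < M" "j < M" "i \<noteq> j" for i j
    using off[OF that] by linarith
  have "eps_tests N (W ` {..<M}) \<epsilon> t"
    by (rule choi_tester[OF N t(1)]) (use W off_m m \<epsilon> t(3) in auto)
  then show "\<exists>q. real q \<le> 4 * ln (real M) / min (\<epsilon>\<^sup>2) \<delta> \<and> eps_tests N (W ` {..<M}) \<epsilon> q"
    using t(2) unfolding m_def by blast
qed (simp)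

end
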